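(* Let $(\lambda,\boldsymbol p)\in\nabla$ and $\mu=\mu(\lambda,\boldsymbol p)=\lambda+\sum_ip_i$. If $k<\mu<k+1$ for some integer $k\ge0$, then $$m_+(\lambda,\boldsymbol p\setminus p_1)\le k\le m_-(\lambda,\boldsymbol p)\le m_+(\lambda,\boldsymbol p)\le k+1,$$ where $p_1=\max_ip_i$. If $\mu=k$ for an integer $k$, then $m_+(\lambda,\boldsymbol p)=m_-(\lambda,\boldsymbol p)=k$, unless $(\lambda,\boldsymbol p)=(k-a,1,\dots,1,0,0,\dots)$ with exactly $a$ ones, for some $k\ge1$ and $0\le a<k$, in which case the distribution is a Poisson distribution shifted to $\{a,a+1,\dots\}$ and has the twin mode $\{k-1,k\}$.
   Context: $\nabla=\{(\lambda,\boldsymbol p):\lambda\ge0,\ 1\ge p_1\ge p_2\ge\dots\ge0,\ \sum_ip_i<\infty\}$. For $(\lambda,\boldsymbol p)\in\nabla$ the extended Bernoulli sum is $S=X+\sum_iB_i$ with $X\sim\mathrm{Poisson}(\lambda)$, $B_i\sim\mathrm{Bernoulli}(p_i)$ independent; $f(k;\lambda,\boldsymbol p)=\mathbb P[S=k]$, $f(-1;\cdot)=0$; $\mu(\lambda,\boldsymbol p)=\mathbb E S$. The leading mode $m_+(\lambda,\boldsymbol p)$ is the unique integer $k$ with $f(k-1)\le f(k)>f(k+1)$; $m_-=m_+$ unless $f(m_+-1)=f(m_+)$, in which case $m_-=m_+-1$. $\boldsymbol p\setminus p_1$ denotes $\boldsymbol p$ with the term $p_1$ removed (replaced by $0$). *)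

theory Defs
  imports "HOL-Analysis.Analysis"
begin

text \<open>Parameters: \<open>p :: nat \<Rightarrow> real\<close>, with \<open>p 0\<close> playing the role of \<open>p_1\<close>.\<close>

definition in_nabla :: "real \<Rightarrow> (nat \<Rightarrow> real) \<Rightarrow> bool" where
  "in_nabla lam p \<longleftrightarrow> lam \<ge> 0 \<and> p 0 \<le> 1 \<and> (\<forall>i. p i \<ge> 0) \<and> (\<forall>i. p (Suc i) \<le> p i)
      \<and> summable p"

definition bern_fin :: "(nat \<Rightarrow> real) \<Rightarrow> nat \<Rightarrow> nat \<Rightarrow> real" where
  "bern_fin p n j = (\<Sum>A\<in>{A. A \<subseteq> {..<n} \<and> card A = j}.
       (\<Prod>i\<in>A. p i) * (\<Prod>i\<in>{..<n} - A. 1 - p i))"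

definition bern_law :: "(nat \<Rightarrow> real) \<Rightarrow> nat \<Rightarrow> real" where
  "bern_law p j = lim (\<lambda>n. bern_fin p n j)"

text \<open>\<open>f(k;\<lambda>,p) = P[X + \<Sum>_i B_i = k]\<close>, \<open>X ~ Poisson(\<lambda>)\<close> independent.\<close>
definition ebs_pmf :: "real \<Rightarrow> (nat \<Rightarrow> real) \<Rightarrow> nat \<Rightarrow> real" where
  "ebs_pmf lam p k = (\<Sum>j\<le>k. exp (- lam) * lam ^ (k - j) / fact (k - j) * bern_law p j)"

definition ebs_mean :: "real \<Rightarrow> (nat \<Rightarrow> real) \<Rightarrow> real" where
  "ebs_mean lam p = lam + suminf p"

definition mode_plus :: "real \<Rightarrow> (nat \<Rightarrow> real) \<Rightarrow> nat" where
  "mode_plus lam p = (THE k. (k = 0 \<or> ebs_pmf lam p (k - 1) \<le> ebs_pmf lam p k)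
                              \<and> ebs_pmf lam p k > ebs_pmf lam p (Suc k))"

definition mode_minus :: "real \<Rightarrow> (nat \<Rightarrow> real) \<Rightarrow> nat" where
  "mode_minus lam p = (let m = mode_plus lam p in
     if m > 0 \<and> ebs_pmf lam p (m - 1) = ebs_pmf lam p m then m - 1 else m)"

end

theory Submission
  imports Defs
begin

text \<open>The law of \<open>X + \<Sum>\<^sub>i B\<^sub>i\<close> is the pointwise limit of the laws of finite Bernoulli sums
  with the same mean (the Poisson part being approximated by \<open>n\<close> summands \<open>\<lambda>/n\<close>), so every
  inequality needed can be proved for finite Bernoulli sums \<open>S\<close> and passed to the limit. There the
  identity
  \<open>k (P[S = k] - P[S = k - 1]) = (\<mu> - k) P[S = k - 1] + \<Sum>\<^sub>i p\<^sub>i\<^sup>2 (P[S\<^sup>(\<^sup>i\<^sup>) = k - 1] - P[S\<^sup>(\<^sup>i\<^sup>) = k - 2])\<close>,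
  with \<open>S\<^sup>(\<^sup>i\<^sup>)\<close> the sum without \<open>B\<^sub>i\<close>, shows by induction on \<open>k\<close> that the law increases up to
  the mean; applied to \<open>1 - p\<^sub>i\<close> it shows that the law decreases after the mean, strictly
  after an exponential tilt. Log-concavity makes the mode unique. Removing \<open>p\<^sub>1\<close> lowers the mean
  by \<open>p\<^sub>1\<close> while every remaining \<open>p\<^sub>i \<le> p\<^sub>1\<close>, which puts the mode of the reduced law at most
  at \<open>k\<close>. At an integer mean \<open>k\<close> the law strictly decreases after \<open>k\<close> (peeling off the
  parameters equal to \<open>1\<close>) and strictly increases into \<open>k\<close> as soon as some \<open>0 < p\<^sub>i < 1\<close>;
  otherwise the law is a shifted Poisson law.\<close>

section \<open>Finite Bernoulli sums\<close>

(* The law of B_0 + ... + B_(m-1); integer arguments let k - 1 go below 0 without truncation. *)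
primrec bern_pmf :: "(nat \<Rightarrow> real) \<Rightarrow> nat \<Rightarrow> int \<Rightarrow> real" where
  "bern_pmf r 0 k = (if k = 0 then 1 else 0)"
| "bern_pmf r (Suc m) k = (1 - r m) * bern_pmf r m k + r m * bern_pmf r m (k - 1)"

definition bern_params :: "(nat \<Rightarrow> real) \<Rightarrow> nat \<Rightarrow> bool" where
  "bern_params r m \<longleftrightarrow> (\<forall>i<m. 0 \<le> r i \<and> r i \<le> 1)"

abbreviation bern_mean :: "(nat \<Rightarrow> real) \<Rightarrow> nat \<Rightarrow> real" where
  "bern_mean r m \<equiv> sum r {..<m}"

lemma bern_params_Suc: "bern_params r (Suc m) \<longleftrightarrow> bern_params r m \<and> 0 \<le> r m \<and> r m \<le> 1"
  by (auto simp: bern_params_def less_Suc_eq)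

lemma bern_params_upd_0: "bern_params r m \<Longrightarrow> bern_params (r(i := 0)) m"
  by (auto simp: bern_params_def)

lemma bern_mean_upd_0: "i < m \<Longrightarrow> bern_mean (r(i := 0)) m = bern_mean r m - r i"
  by (simp add: sum.remove[of "{..<m}" i] sum.cong[of "{..<m} - {i}" _ "r(i := 0)" r])

lemma bern_pmf_neg: "k < 0 \<Longrightarrow> bern_pmf r m k = 0"
  by (induction m arbitrary: k) auto

lemma bern_pmf_above: "int m < k \<Longrightarrow> bern_pmf r m k = 0"
  by (induction m arbitrary: k) auto

lemma bern_pmf_cong: "(\<And>i. i < m \<Longrightarrow> r i = s i) \<Longrightarrow> bern_pmf r m k = bern_pmf s m k"
  by (induction m arbitrary: k) auto

lemma bern_pmf_nonneg: "bern_params r m \<Longrightarrow> 0 \<le> bern_pmf r m k"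
  by (induction m arbitrary: k) (auto simp: bern_params_Suc)

lemma bern_pmf_le_1: "bern_params r m \<Longrightarrow> bern_pmf r m k \<le> 1"
proof (induction m arbitrary: k)
  case (Suc m)
  then have "(1 - r m) * bern_pmf r m k + r m * bern_pmf r m (k - 1) \<le> (1 - r m) * 1 + r m * 1"
    by (intro add_mono mult_left_mono) (auto simp: bern_params_Suc)
  then show ?case by simp
qed simp

lemma subsets_lessThan_Suc_card_Suc:
  "{A. A \<subseteq> {..<Suc n} \<and> card A = Suc j} =
     {A. A \<subseteq> {..<n} \<and> card A = Suc j} \<union> insert n ` {A. A \<subseteq> {..<n} \<and> card A = j}"
    (is "?L = ?R")
proof
  show "?L \<subseteq> ?R"
  proof
    fix A assume A: "A \<in> ?L"
    then have fin: "finite A" by (auto intro: finite_subset)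
    show "A \<in> ?R"
    proof (cases "n \<in> A")
      case True
      then have "A = insert n (A - {n})" "A - {n} \<subseteq> {..<n}" "card (A - {n}) = j"
        using A fin by (auto simp: less_Suc_eq)
      then show ?thesis by blast
    next
      case False
      then show ?thesis using A by (auto simp: less_Suc_eq)
    qed
  qed
  show "?R \<subseteq> ?L"
    by (auto intro!: card_insert_disjoint dest: finite_subset)
qed

lemma bern_fin_Suc:
  "bern_fin p (Suc n) j = (1 - p n) * bern_fin p n j + (if j = 0 then 0 else p n * bern_fin p n (j - 1))"
proof -
  define w where "w N A = (\<Prod>i\<in>A. p i) * (\<Prod>i\<in>{..<N} - A. 1 - p i)" for N A
  define S where "S j = {A. A \<subseteq> {..<n} \<and> card A = j}" for j
  have fin: "finite (S j)" for j
    unfolding S_def by (rule finite_subset[of _ "Pow {..<n}"]) auto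
  have bf: "bern_fin p n j = (\<Sum>A\<in>S j. w n A)" for j
    by (simp add: bern_fin_def w_def S_def)
  have w_out: "w (Suc n) A = (1 - p n) * w n A" if "A \<in> S j" for A j
  proof -
    have "{..<Suc n} - A = insert n ({..<n} - A)" using that by (auto simp: S_def)
    then show ?thesis by (simp add: w_def)
  qed
  have w_in: "w (Suc n) (insert n A) = p n * w n A" if "A \<in> S j" for A j
  proof -
    have "{..<Suc n} - insert n A = {..<n} - A" "n \<notin> A" "finite A"
      using that by (auto simp: S_def intro: finite_subset)
    then show ?thesis by (simp add: w_def)
  qed
  have out: "(\<Sum>A\<in>S j. w (Suc n) A) = (1 - p n) * bern_fin p n j" for j
    by (simp add: bf sum_distrib_left w_out)
  show ?thesis
  proof (cases j)
    case 0
    have "{A. A \<subseteq> {..<Suc n} \<and> card A = 0} = S 0"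
      by (auto simp: S_def card_eq_0_iff dest: finite_subset)
    then show ?thesis using 0 out[of 0] by (simp add: bern_fin_def w_def)
  next
    case (Suc i)
    have inj: "inj_on (insert n) (S i)" by (auto simp: S_def inj_on_def)
    have "bern_fin p (Suc n) j = (\<Sum>A\<in>S j \<union> insert n ` S i. w (Suc n) A)"
      using Suc by (simp add: bern_fin_def w_def S_def subsets_lessThan_Suc_card_Suc)
    also have "\<dots> = (\<Sum>A\<in>S j. w (Suc n) A) + (\<Sum>A\<in>S i. w (Suc n) (insert n A))"
      using fin sum.reindex[OF inj, of "w (Suc n)"]
      by (subst sum.union_disjoint) (auto simp: S_def)
    finally show ?thesis
      using Suc by (simp add: out bf sum_distrib_left w_in)
  qed
qed

lemma bern_fin_eq_bern_pmf: "bern_fin p n j = bern_pmf p n (int j)"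
proof (induction n arbitrary: j)
  case 0
  have "{A. A \<subseteq> {..<0::nat} \<and> card A = j} = (if j = 0 then {{}} else {})" by auto
  then show ?case by (simp add: bern_fin_def)
next
  case (Suc n)
  then show ?case
    by (cases j) (simp_all add: bern_fin_Suc bern_pmf_neg)
qed

lemma bern_pmf_remove:
  "i < m \<Longrightarrow> bern_pmf r m k = (1 - r i) * bern_pmf (r(i := 0)) m k + r i * bern_pmf (r(i := 0)) m (k - 1)"
proof (induction m arbitrary: k)
  case (Suc m)
  define h where "h = r(i := 0)"
  show ?case
  proof (cases "i = m")
    case True
    have "h m = 0" "bern_pmf h m = bern_pmf r m"
      using True by (auto simp: h_def intro!: ext bern_pmf_cong)
    then have drop: "bern_pmf h (Suc m) k' = bern_pmf r m k'" for k'
      by simp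
    show ?thesis unfolding h_def[symmetric] unfolding True drop by simp
  next
    case False
    then have "i < m" "h m = r m" using Suc.prems by (auto simp: h_def)
    then show ?thesis
      using Suc.IH[of k] Suc.IH[of "k - 1"] unfolding h_def[symmetric]
      by (simp only: bern_pmf.simps) (simp add: algebra_simps)
  qed
qed simp

lemma bern_pmf_size_bias:
  "of_int k * bern_pmf r m k = (\<Sum>i<m. r i * bern_pmf (r(i := 0)) m (k - 1))"
proof (induction m arbitrary: k)
  case (Suc m)
  have step: "bern_pmf (r(i := 0)) (Suc m) k'
      = (1 - r m) * bern_pmf (r(i := 0)) m k' + r m * bern_pmf (r(i := 0)) m (k' - 1)"
    if "i < m" for i k'
    using that by simp
  have last: "bern_pmf (r(m := 0)) (Suc m) k' = bern_pmf r m k'" for k'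
    by (simp add: bern_pmf_cong[of m "r(m := 0)" r])
  have "(\<Sum>i<Suc m. r i * bern_pmf (r(i := 0)) (Suc m) (k - 1))
      = (\<Sum>i<m. (1 - r m) * (r i * bern_pmf (r(i := 0)) m (k - 1))
          + r m * (r i * bern_pmf (r(i := 0)) m (k - 1 - 1))) + r m * bern_pmf r m (k - 1)"
    unfolding sum.lessThan_Suc last
    by (intro arg_cong2[where f = "(+)"] sum.cong refl) (simp only: step lessThan_iff algebra_simps)
  also have "\<dots> = (1 - r m) * (of_int k * bern_pmf r m k)
      + r m * (of_int (k - 1) * bern_pmf r m (k - 1)) + r m * bern_pmf r m (k - 1)"
    by (simp only: Suc.IH sum.distrib sum_distrib_left)
  also have "\<dots> = of_int k * bern_pmf r (Suc m) k"
    by (simp add: algebra_simps)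
  finally show ?case ..
qed simp

lemma bern_pmf_increment_identity:
  "of_int k * (bern_pmf r m k - bern_pmf r m (k - 1)) = (bern_mean r m - of_int k) * bern_pmf r m (k - 1)
     + (\<Sum>i<m. r i ^ 2 * (bern_pmf (r(i := 0)) m (k - 1) - bern_pmf (r(i := 0)) m (k - 1 - 1)))"
proof -
  have "r i * bern_pmf (r(i := 0)) m (k - 1) = r i * bern_pmf r m (k - 1)
      + r i ^ 2 * (bern_pmf (r(i := 0)) m (k - 1) - bern_pmf (r(i := 0)) m (k - 1 - 1))"
    if "i < m" for i
  proof -
    have "r i * bern_pmf r m (k - 1) = r i * ((1 - r i) * bern_pmf (r(i := 0)) m (k - 1)
        + r i * bern_pmf (r(i := 0)) m (k - 1 - 1))"
      using bern_pmf_remove[OF that, of r "k - 1"] by simp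
    then show ?thesis by (simp add: algebra_simps power2_eq_square)
  qed
  then have "of_int k * bern_pmf r m k = bern_mean r m * bern_pmf r m (k - 1)
      + (\<Sum>i<m. r i ^ 2 * (bern_pmf (r(i := 0)) m (k - 1) - bern_pmf (r(i := 0)) m (k - 1 - 1)))"
    by (simp add: bern_pmf_size_bias sum.distrib sum_distrib_right)
  then show ?thesis by (simp add: algebra_simps)
qed

lemma bern_pmf_moments:
  assumes "bern_params r m" "m \<le> N"
  shows "(\<Sum>j\<le>N. bern_pmf r m (int j)) = 1" "(\<Sum>j\<le>N. of_nat j * bern_pmf r m (int j)) = bern_mean r m"
proof -
  have "(\<Sum>j\<le>N. bern_pmf r m (int j)) = 1 \<and> (\<Sum>j\<le>N. of_nat j * bern_pmf r m (int j)) = bern_mean r m"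
    using assms
  proof (induction m arbitrary: N)
    case 0
    have "(\<Sum>j\<le>N. bern_pmf r 0 (int j)) = (\<Sum>j\<in>{0}. bern_pmf r 0 (int j))"
      by (intro sum.mono_neutral_right) auto
    moreover have "(\<Sum>j\<le>N. of_nat j * bern_pmf r 0 (int j)) = 0"
      by (intro sum.neutral) auto
    ultimately show ?case by simp
  next
    case (Suc m)
    then obtain N' where N: "N = Suc N'" "m \<le> N'" by (cases N) auto
    have IH: "(\<Sum>j\<le>N. bern_pmf r m (int j)) = 1"
      "(\<Sum>j\<le>N. of_nat j * bern_pmf r m (int j)) = bern_mean r m"
      using Suc.IH[of N] Suc.prems by (auto simp: bern_params_Suc)
    have top: "bern_pmf r m (int N) = 0" using N by (simp add: bern_pmf_above)
    have shift: "(\<Sum>j\<le>N. f j * bern_pmf r m (int j - 1)) = (\<Sum>j\<le>N. f (Suc j) * bern_pmf r m (int j))"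
      for f :: "nat \<Rightarrow> real"
    proof -
      have "(\<Sum>j\<le>N. f j * bern_pmf r m (int j - 1)) = (\<Sum>j\<le>N'. f (Suc j) * bern_pmf r m (int j))"
        unfolding N(1) sum.atMost_Suc_shift by (simp add: bern_pmf_neg)
      also have "\<dots> = (\<Sum>j\<le>N. f (Suc j) * bern_pmf r m (int j))"
        using N top by simp
      finally show ?thesis .
    qed
    have t1: "(\<Sum>j\<le>N. bern_pmf r (Suc m) (int j))
        = (1 - r m) * (\<Sum>j\<le>N. bern_pmf r m (int j)) + r m * (\<Sum>j\<le>N. bern_pmf r m (int j - 1))"
      by (simp add: sum.distrib sum_distrib_left)
    have t2: "(\<Sum>j\<le>N. of_nat j * bern_pmf r (Suc m) (int j))
        = (1 - r m) * (\<Sum>j\<le>N. of_nat j * bern_pmf r m (int j))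
          + r m * (\<Sum>j\<le>N. of_nat j * bern_pmf r m (int j - 1))"
      by (simp add: sum_distrib_left sum.distrib[symmetric] algebra_simps)
    show ?case
      unfolding t1 t2 shift[of "\<lambda>_. 1", simplified] shift[of real] of_nat_Suc
      by (simp add: sum.distrib algebra_simps IH)
  qed
  then show "(\<Sum>j\<le>N. bern_pmf r m (int j)) = 1" "(\<Sum>j\<le>N. of_nat j * bern_pmf r m (int j)) = bern_mean r m"
    by auto
qed

lemma bern_pmf_markov:
  assumes "bern_params r m"
  shows "(of_nat K + 1) * (1 - (\<Sum>j\<le>K. bern_pmf r m (int j))) \<le> bern_mean r m"
proof -
  define N where "N = max K m"
  define T where "T = {..N} - {..K}"
  have split: "(\<Sum>j\<le>N. f j) = (\<Sum>j\<le>K. f j) + (\<Sum>j\<in>T. f j)" for f :: "nat \<Rightarrow> real"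
    using sum.subset_diff[of "{..K}" "{..N}"] by (simp add: N_def T_def add.commute)
  have "(of_nat K + 1) * (\<Sum>j\<in>T. bern_pmf r m (int j)) \<le> (\<Sum>j\<in>T. of_nat j * bern_pmf r m (int j))"
    unfolding sum_distrib_left
    by (intro sum_mono mult_right_mono bern_pmf_nonneg[OF assms]) (auto simp: T_def)
  moreover have "0 \<le> (\<Sum>j\<le>K. of_nat j * bern_pmf r m (int j))"
    by (intro sum_nonneg mult_nonneg_nonneg bern_pmf_nonneg[OF assms]) auto
  moreover have "1 - (\<Sum>j\<le>K. bern_pmf r m (int j)) = (\<Sum>j\<in>T. bern_pmf r m (int j))"
    using bern_pmf_moments(1)[OF assms, of N] split[of "\<lambda>j. bern_pmf r m (int j)"] by (simp add: N_def)
  ultimately show ?thesis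
    using bern_pmf_moments(2)[OF assms, of N] split[of "\<lambda>j. of_nat j * bern_pmf r m (int j)"]
    by (simp add: N_def)
qed

text \<open>Once the increments of the laws with one summand removed are nonnegative, the increment
  identity gives \<open>k (1 - d) (P[S = k] - P[S = k - 1]) \<ge> (\<mu> + d - k) P[S = k - 1] \<ge> 0\<close>.\<close>
lemma bern_pmf_mono_step:
  assumes r: "bern_params r m" "\<forall>i<m. r i = 0 \<or> d \<le> r i"
    and d: "0 \<le> d" "d < 1" and k: "0 < k" "of_int k \<le> bern_mean r m + d"
    and removed: "\<And>i. i < m \<Longrightarrow> bern_pmf (r(i := 0)) m (k - 1 - 1) \<le> bern_pmf (r(i := 0)) m (k - 1)"
  shows "bern_pmf r m (k - 1) \<le> bern_pmf r m k"
proof -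
  define D where "D i = bern_pmf (r(i := 0)) m (k - 1) - bern_pmf (r(i := 0)) m (k - 1 - 1)" for i
  have "d * (r i * D i) \<le> r i * (r i * D i)" if "i < m" for i
  proof (cases "r i = 0")
    case False
    then have "d \<le> r i" "0 \<le> r i * D i"
      using r removed[OF that] that by (auto simp: bern_params_def D_def)
    then show ?thesis by (rule mult_right_mono)
  qed simp
  then have "d * (\<Sum>i<m. r i * D i) \<le> (\<Sum>i<m. r i ^ 2 * D i)"
    unfolding sum_distrib_left power2_eq_square mult.assoc by (intro sum_mono) auto
  also have "(\<Sum>i<m. r i ^ 2 * D i)
      = of_int k * (bern_pmf r m k - bern_pmf r m (k - 1)) - (bern_mean r m - of_int k) * bern_pmf r m (k - 1)"
    using bern_pmf_increment_identity[of k r m] unfolding D_def by simp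
  finally have "d * (of_int k * bern_pmf r m k - of_int (k - 1) * bern_pmf r m (k - 1))
      \<le> of_int k * (bern_pmf r m k - bern_pmf r m (k - 1)) - (bern_mean r m - of_int k) * bern_pmf r m (k - 1)"
    unfolding D_def bern_pmf_size_bias[of k] bern_pmf_size_bias[of "k - 1"]
    by (simp add: sum_subtractf algebra_simps)
  moreover have "0 \<le> (bern_mean r m + d - of_int k) * bern_pmf r m (k - 1)"
    using r(1) k(2) by (simp add: bern_pmf_nonneg)
  ultimately have "0 \<le> of_int k * (1 - d) * (bern_pmf r m k - bern_pmf r m (k - 1))"
    by (simp add: algebra_simps)
  moreover have "0 < of_int k * (1 - d)" using d k by simp
  ultimately show ?thesis by (simp add: zero_le_mult_iff)
qed

lemma bern_pmf_mono_below_mean_gap: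
  assumes "bern_params r m" "0 \<le> d" "d < 1" "\<forall>i<m. r i = 0 \<or> d \<le> r i"
    and "of_int k \<le> bern_mean r m + d"
  shows "bern_pmf r m (k - 1) \<le> bern_pmf r m k"
proof -
  have "bern_pmf r m (int n - 1) \<le> bern_pmf r m (int n)"
    if "bern_params r m" "\<forall>i<m. r i = 0 \<or> d \<le> r i" "real n \<le> bern_mean r m + d" for n r
    using that
  proof (induction n arbitrary: r)
    case 0
    then show ?case by (simp add: bern_pmf_neg bern_pmf_nonneg)
  next
    case (Suc n)
    show ?case
    proof (rule bern_pmf_mono_step[OF Suc.prems(1,2) assms(2,3)])
      fix i assume i: "i < m"
      have "r i \<le> 1" using Suc.prems(1) i by (simp add: bern_params_def)
      then have "real n \<le> bern_mean (r(i := 0)) m + d"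
        using bern_mean_upd_0[OF i, of r] Suc.prems(3) by simp
      moreover have "\<forall>j<m. (r(i := 0)) j = 0 \<or> d \<le> (r(i := 0)) j"
        using Suc.prems(2) by simp
      ultimately have "bern_pmf (r(i := 0)) m (int n - 1) \<le> bern_pmf (r(i := 0)) m (int n)"
        by (intro Suc.IH[OF bern_params_upd_0[OF Suc.prems(1)]])
      then show "bern_pmf (r(i := 0)) m (int (Suc n) - 1 - 1) \<le> bern_pmf (r(i := 0)) m (int (Suc n) - 1)"
        by simp
    qed (use Suc.prems(3) in simp_all)
  qed
  moreover have "bern_pmf r m (k - 1) \<le> bern_pmf r m k" if "k < 0"
    using that by (simp add: bern_pmf_neg)
  ultimately show ?thesis
    using assms by (metis nonneg_int_cases not_less of_int_of_nat_eq)
qed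

lemma bern_pmf_mono_below_mean:
  "bern_params r m \<Longrightarrow> of_int k \<le> bern_mean r m \<Longrightarrow> bern_pmf r m (k - 1) \<le> bern_pmf r m k"
  by (rule bern_pmf_mono_below_mean_gap[where d = 0]) (auto simp: bern_params_def)

lemma bern_pmf_increment_ge:
  assumes "bern_params r m" "of_int k \<le> bern_mean r m" "i < m"
  shows "(bern_mean r m - of_int k) * bern_pmf r m (k - 1)
           + r i ^ 2 * (bern_pmf (r(i := 0)) m (k - 1) - bern_pmf (r(i := 0)) m (k - 1 - 1))
         \<le> of_int k * (bern_pmf r m k - bern_pmf r m (k - 1))"
proof -
  define D where "D j = r j ^ 2 * (bern_pmf (r(j := 0)) m (k - 1) - bern_pmf (r(j := 0)) m (k - 1 - 1))" for j
  have "0 \<le> D j" if "j < m" for j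
  proof -
    have "r j \<le> 1" using assms(1) that by (simp add: bern_params_def)
    then have "of_int (k - 1) \<le> bern_mean (r(j := 0)) m"
      using bern_mean_upd_0[OF that, of r] assms(2) by simp
    from bern_pmf_mono_below_mean[OF bern_params_upd_0[OF assms(1)] this]
    show ?thesis by (simp add: D_def)
  qed
  then have "D i \<le> (\<Sum>j<m. D j)"
    using assms(3) by (intro member_le_sum) auto
  then show ?thesis using bern_pmf_increment_identity[of k r m] by (simp add: D_def)
qed

lemma bern_pmf_reflect: "bern_pmf (\<lambda>i. 1 - r i) m k = bern_pmf r m (int m - k)"
proof (induction m arbitrary: k)
  case (Suc m)
  show ?case
    using Suc.IH[of k] Suc.IH[of "k - 1"] by (simp add: algebra_simps)
qed simp

lemma bern_pmf_antimono_above_mean: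
  assumes "bern_params r m" "0 < c" "c \<le> 1" "\<forall>i<m. r i \<le> c"
    and "bern_mean r m + c \<le> of_int k + 1"
  shows "bern_pmf r m (k + 1) \<le> bern_pmf r m k"
proof -
  have "bern_mean (\<lambda>i. 1 - r i) m = real m - bern_mean r m"
    by (simp add: sum_subtractf)
  then have "bern_pmf (\<lambda>i. 1 - r i) m (int m - k - 1) \<le> bern_pmf (\<lambda>i. 1 - r i) m (int m - k)"
    using assms by (intro bern_pmf_mono_below_mean_gap[where d = "1 - c"]) (auto simp: bern_params_def)
  then show ?thesis by (simp add: bern_pmf_reflect)
qed

definition tilt_prob :: "real \<Rightarrow> real \<Rightarrow> real" where
  "tilt_prob t a = a * t / (1 - a + a * t)"

lemma tilt_prob_bounds:
  assumes "0 \<le> a" "a \<le> 1" "1 \<le> t"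
  shows "0 \<le> tilt_prob t a" "tilt_prob t a \<le> 1" "tilt_prob t a \<le> t * a"
proof -
  have den: "1 \<le> 1 - a + a * t"
    using assms mult_left_mono[of 1 t a] by simp
  then show "0 \<le> tilt_prob t a" "tilt_prob t a \<le> 1"
    using assms by (simp_all add: tilt_prob_def field_simps)
  have "a * t * 1 \<le> a * t * (1 - a + a * t)"
    using assms den by (intro mult_left_mono) auto
  then show "tilt_prob t a \<le> t * a"
    using den by (simp add: tilt_prob_def divide_le_eq mult.commute)
qed

lemma tilt_prob_pos:
  assumes "0 < a" "a \<le> 1" "1 \<le> t"
  shows "0 < tilt_prob t a"
proof -
  have "0 < a * t" using assms by simp
  then have "0 < 1 - a + a * t" using assms(2) by linarith
  then show ?thesis using assms by (simp add: tilt_prob_def)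
qed

lemma tilt_prob_mono:
  assumes "0 \<le> a" "a \<le> b" "b \<le> 1" "1 \<le> t"
  shows "tilt_prob t a \<le> tilt_prob t b"
proof -
  have "1 \<le> 1 - a + a * t" "1 \<le> 1 - b + b * t"
    using assms mult_left_mono[of 1 t a] mult_left_mono[of 1 t b] by auto
  moreover have "a * t * (1 - b + b * t) \<le> b * t * (1 - a + a * t)"
    using assms mult_right_mono[of a b t] by (simp add: algebra_simps)
  ultimately show ?thesis by (simp add: tilt_prob_def divide_simps)
qed

lemma bern_pmf_tilt:
  assumes "bern_params r m" "1 \<le> t"
  shows "bern_pmf (\<lambda>i. tilt_prob t (r i)) m k * (\<Prod>i<m. 1 - r i + r i * t) = t ^ nat k * bern_pmf r m k"
  using assms(1)
proof (induction m arbitrary: k)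
  case (Suc m)
  let ?a = "r m" and ?Z = "\<Prod>i<m. 1 - r i + r i * t"
  have "1 \<le> 1 - ?a + ?a * t"
    using Suc.prems assms(2) mult_left_mono[of 1 t ?a] by (simp add: bern_params_Suc)
  then have weights: "(1 - tilt_prob t ?a) * (1 - ?a + ?a * t) = 1 - ?a"
      "tilt_prob t ?a * (1 - ?a + ?a * t) = ?a * t"
    by (simp_all add: tilt_prob_def field_simps)
  have shift: "t * (t ^ nat (k - 1) * bern_pmf r m (k - 1)) = t ^ nat k * bern_pmf r m (k - 1)"
    by (cases "1 \<le> k") (simp_all add: bern_pmf_neg power_Suc[symmetric] Suc_nat_eq_nat_zadd1)
  have "bern_pmf (\<lambda>i. tilt_prob t (r i)) (Suc m) k * (?Z * (1 - ?a + ?a * t))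
      = ((1 - tilt_prob t ?a) * (1 - ?a + ?a * t)) * (bern_pmf (\<lambda>i. tilt_prob t (r i)) m k * ?Z)
        + (tilt_prob t ?a * (1 - ?a + ?a * t)) * (bern_pmf (\<lambda>i. tilt_prob t (r i)) m (k - 1) * ?Z)"
    by (simp add: algebra_simps)
  also have "\<dots> = t ^ nat k * bern_pmf r (Suc m) k"
    using Suc.prems by (simp only: weights Suc.IH bern_params_Suc) (simp add: algebra_simps shift)
  finally show ?case by simp
qed simp

lemma bern_params_tilt:
  assumes r: "bern_params r m" and t: "1 \<le> t" and c: "c \<le> 1" "\<forall>i<m. r i \<le> c"
  shows "bern_params (\<lambda>i. tilt_prob t (r i)) m" "\<forall>i<m. tilt_prob t (r i) \<le> tilt_prob t c"
    "bern_mean (\<lambda>i. tilt_prob t (r i)) m \<le> t * bern_mean r m"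
proof -
  have r_bounds: "0 \<le> r i" "r i \<le> 1" if "i < m" for i
    using r that by (auto simp: bern_params_def)
  show "bern_params (\<lambda>i. tilt_prob t (r i)) m"
    using r_bounds tilt_prob_bounds[OF _ _ t] by (simp add: bern_params_def)
  show "\<forall>i<m. tilt_prob t (r i) \<le> tilt_prob t c"
    using r_bounds c tilt_prob_mono[OF _ _ _ t] by simp
  have "bern_mean (\<lambda>i. tilt_prob t (r i)) m \<le> (\<Sum>i<m. t * r i)"
    using r_bounds tilt_prob_bounds(3)[OF _ _ t] by (auto intro: sum_mono)
  then show "bern_mean (\<lambda>i. tilt_prob t (r i)) m \<le> t * bern_mean r m"
    by (simp add: sum_distrib_left)
qed

text \<open>Tilting by \<open>t = (k + 1) / (mean + c)\<close> preserves the hypotheses of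
  \<open>bern_pmf_antimono_above_mean\<close>, and for the tilted law its conclusion reads
  \<open>t * P[S = k + 1] \<le> P[S = k]\<close>.\<close>
lemma bern_pmf_strict_antimono_above_mean:
  assumes r: "bern_params r m" and c: "0 < c" "c \<le> 1" "\<forall>i<m. r i \<le> c"
    and mean: "bern_mean r m + c \<le> of_int k + 1"
  shows "(of_int k + 1) / (bern_mean r m + c) * bern_pmf r m (k + 1) \<le> bern_pmf r m k"
proof -
  define t where "t = (of_int k + 1) / (bern_mean r m + c)"
  have "0 \<le> bern_mean r m"
    using r by (intro sum_nonneg) (simp add: bern_params_def)
  then have pos: "0 < bern_mean r m + c"
    using c(1) by linarith
  then have t: "1 \<le> t" and k: "0 \<le> k"
    using mean by (simp_all add: t_def field_simps)
  have "bern_mean (\<lambda>i. tilt_prob t (r i)) m + tilt_prob t c \<le> t * (bern_mean r m + c)"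
    using bern_params_tilt(3)[OF r t c(2,3)] tilt_prob_bounds(3)[OF _ c(2) t] c(1)
    by (simp add: algebra_simps)
  also have "\<dots> = of_int k + 1" using pos by (simp add: t_def)
  finally have "bern_pmf (\<lambda>i. tilt_prob t (r i)) m (k + 1) \<le> bern_pmf (\<lambda>i. tilt_prob t (r i)) m k"
    using bern_params_tilt(1,2)[OF r t c(2,3)] tilt_prob_pos[OF c(1,2) t] tilt_prob_bounds(2)[OF _ c(2) t] c(1)
    by (intro bern_pmf_antimono_above_mean[where c = "tilt_prob t c"]) auto
  moreover have "0 \<le> (\<Prod>i<m. 1 - r i + r i * t)"
    using r t by (intro prod_nonneg) (simp add: bern_params_def add_nonneg_nonneg)
  ultimately have "bern_pmf (\<lambda>i. tilt_prob t (r i)) m (k + 1) * (\<Prod>i<m. 1 - r i + r i * t)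
      \<le> bern_pmf (\<lambda>i. tilt_prob t (r i)) m k * (\<Prod>i<m. 1 - r i + r i * t)"
    by (rule mult_right_mono)
  then have "t ^ nat k * (t * bern_pmf r m (k + 1)) \<le> t ^ nat k * bern_pmf r m k"
    unfolding bern_pmf_tilt[OF r t] using k by (simp add: nat_add_distrib mult_ac)
  then have "t * bern_pmf r m (k + 1) \<le> bern_pmf r m k"
    using t by (simp add: mult_le_cancel_left_pos)
  then show ?thesis by (simp add: t_def)
qed

lemma bern_pmf_log_concave:
  "bern_params r m \<Longrightarrow> x \<le> y \<Longrightarrow> bern_pmf r m (x - 1) * bern_pmf r m (y + 1) \<le> bern_pmf r m x * bern_pmf r m y"
proof (induction m arbitrary: x y)
  case (Suc m)
  define a where "a = r m"
  define g where "g = bern_pmf r m"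
  have a: "0 \<le> a" "a \<le> 1" using Suc.prems(1) by (auto simp: a_def bern_params_Suc)
  have IH: "u \<le> v \<Longrightarrow> g (u - 1) * g (v + 1) \<le> g u * g v" for u v
    using Suc.IH Suc.prems(1) by (simp add: g_def bern_params_Suc)
  have mixed: "g (x - 1 - 1) * g (y + 1) \<le> g x * g (y - 1)"
  proof (cases "x = y")
    case True
    then show ?thesis using IH[of "x - 1" x] by (simp add: mult.commute)
  next
    case False
    then have "g (x - 1) * g y \<le> g x * g (y - 1)" "g (x - 1 - 1) * g (y + 1) \<le> g (x - 1) * g y"
      using IH[of x "y - 1"] IH[of "x - 1" y] Suc.prems(2) by simp_all
    then show ?thesis by linarith
  qed
  have "bern_pmf r (Suc m) x * bern_pmf r (Suc m) y - bern_pmf r (Suc m) (x - 1) * bern_pmf r (Suc m) (y + 1)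
      = (1 - a)^2 * (g x * g y - g (x - 1) * g (y + 1))
        + a^2 * (g (x - 1) * g (y - 1) - g (x - 1 - 1) * g (y - 1 + 1))
        + a * (1 - a) * (g x * g (y - 1) - g (x - 1 - 1) * g (y + 1))"
    by (simp add: a_def g_def algebra_simps power2_eq_square)
  moreover have "0 \<le> (1 - a)^2 * (g x * g y - g (x - 1) * g (y + 1))"
    using IH[OF Suc.prems(2)] by simp
  moreover have "0 \<le> a^2 * (g (x - 1) * g (y - 1) - g (x - 1 - 1) * g (y - 1 + 1))"
    using IH[of "x - 1" "y - 1"] Suc.prems(2) by simp
  moreover have "0 \<le> a * (1 - a) * (g x * g (y - 1) - g (x - 1 - 1) * g (y + 1))"
    using mixed a by simp
  ultimately show ?case by linarith
qed auto

lemma bern_pmf_append: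
  "bern_pmf r (n + m) k = (\<Sum>j\<le>n. bern_pmf r n (int j) * bern_pmf (\<lambda>i. r (n + i)) m (k - int j))"
proof (induction m arbitrary: k)
  case 0
  show ?case
  proof (cases "0 \<le> k \<and> k \<le> int n")
    case True
    then obtain j0 where j0: "k = int j0" "j0 \<le> n" by (metis nonneg_int_cases of_nat_le_iff)
    have "(\<Sum>j\<le>n. bern_pmf r n (int j) * bern_pmf (\<lambda>i. r (n + i)) 0 (k - int j))
        = (\<Sum>j\<in>{j0}. bern_pmf r n (int j) * bern_pmf (\<lambda>i. r (n + i)) 0 (k - int j))"
      using j0 by (intro sum.mono_neutral_right) auto
    then show ?thesis using j0 by simp
  next
    case False
    then have "bern_pmf r n k = 0" by (auto simp: bern_pmf_neg bern_pmf_above)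
    moreover have "(\<Sum>j\<le>n. bern_pmf r n (int j) * bern_pmf (\<lambda>i. r (n + i)) 0 (k - int j)) = 0"
      using False by (intro sum.neutral) auto
    ultimately show ?thesis by simp
  qed
next
  case (Suc m)
  have "bern_pmf r (n + Suc m) k = (1 - r (n + m)) * bern_pmf r (n + m) k + r (n + m) * bern_pmf r (n + m) (k - 1)"
    by simp
  also have "\<dots> = (\<Sum>j\<le>n. bern_pmf r n (int j) * bern_pmf (\<lambda>i. r (n + i)) (Suc m) (k - int j))"
    unfolding Suc.IH sum_distrib_left sum.distrib[symmetric]
    by (intro sum.cong refl) (simp add: algebra_simps)
  finally show ?case .
qed

lemma bern_pmf_Suc_shift: "r 0 = 0 \<Longrightarrow> bern_pmf r (Suc n) k = bern_pmf (\<lambda>i. r (Suc i)) n k"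
  using bern_pmf_append[of r 1 n k] by simp

lemma bern_pmf_const:
  "bern_pmf (\<lambda>_. a) n (int j) = of_nat (n choose j) * a ^ j * (1 - a) ^ (n - j)"
proof (induction n arbitrary: j)
  case 0
  then show ?case by (cases j) auto
next
  case (Suc n)
  show ?case
  proof (cases "j = 0")
    case True
    then show ?thesis using Suc.IH[of 0] by (simp add: bern_pmf_neg)
  next
    case False
    then obtain i where j: "j = Suc i" by (cases j) auto
    have "int j - 1 = int i" using j by simp
    then have step: "bern_pmf (\<lambda>_. a) (Suc n) (int j)
        = (1 - a) * bern_pmf (\<lambda>_. a) n (int j) + a * bern_pmf (\<lambda>_. a) n (int i)"
      by (simp only: bern_pmf.simps)
    have "(1 - a) * bern_pmf (\<lambda>_. a) n (int j) = of_nat (n choose j) * a ^ j * (1 - a) ^ (Suc n - j)"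
    proof (cases "j \<le> n")
      case True
      then have "Suc n - j = Suc (n - j)" by simp
      then show ?thesis unfolding Suc.IH[of j] by (simp only: power_Suc mult_ac)
    qed (simp add: Suc.IH)
    moreover have "a * bern_pmf (\<lambda>_. a) n (int i) = of_nat (n choose i) * a ^ j * (1 - a) ^ (Suc n - j)"
      unfolding Suc.IH[of i] j by simp
    moreover have "of_nat (Suc n choose j) = (of_nat (n choose j) + of_nat (n choose i) :: real)"
      using j by simp
    ultimately show ?thesis unfolding step by (simp add: algebra_simps)
  qed
qed

lemma bern_pmf_indicator:
  "bern_pmf (\<lambda>i. if i < a then 1 else 0) n k = (if k = int (min n a) then 1 else 0)"
  by (induction n arbitrary: k) auto

section \<open>Poisson limit of binomial laws\<close>

definition poisson_prob :: "real \<Rightarrow> nat \<Rightarrow> real" where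
  "poisson_prob lam j = exp (- lam) * lam ^ j / fact j"

lemma poisson_prob_Suc: "poisson_prob lam (Suc n) = poisson_prob lam n * lam / real (Suc n)"
  by (simp add: poisson_prob_def field_simps)

lemma binomial_div_power_tendsto: "(\<lambda>n. of_nat (n choose i) / real n ^ i) \<longlonglongrightarrow> 1 / fact i"
proof -
  define P where "P n = (\<Prod>l = 0..<i. (real (n - l) / real n) / real (i - l))" for n
  have "(\<lambda>n. real (n - l) / real n) \<longlonglongrightarrow> 1" for l
  proof -
    have "(\<lambda>n. 1 - real l / real n) \<longlonglongrightarrow> 1 - 0" by (intro tendsto_intros)
    moreover have "eventually (\<lambda>n. 1 - real l / real n = real (n - l) / real n) sequentially"
      using eventually_ge_at_top[of "Suc l"] by eventually_elim (simp add: of_nat_diff field_simps)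
    ultimately show ?thesis by (simp add: Lim_transform_eventually)
  qed
  then have "P \<longlonglongrightarrow> (\<Prod>l = 0..<i. 1 / real (i - l))"
    unfolding P_def by (intro tendsto_prod tendsto_divide tendsto_const) auto
  also have "(\<Prod>l = 0..<i. 1 / real (i - l)) = 1 / fact i"
    by (simp add: fact_prod_rev prod_dividef)
  finally show ?thesis
  proof (rule Lim_transform_eventually)
    show "eventually (\<lambda>n. P n = of_nat (n choose i) / real n ^ i) sequentially"
      using eventually_ge_at_top[of i]
    proof eventually_elim
      case (elim n)
      have "P n = (\<Prod>l = 0..<i. real (n - l) / real (i - l)) / (\<Prod>l = 0..<i. real n)"
        unfolding P_def prod_dividef[symmetric] by (intro prod.cong refl) simp
      then show ?case using binomial_altdef_of_nat[OF elim, where 'a = real] by simp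
    qed
  qed
qed

lemma binomial_tendsto_poisson:
  "(\<lambda>n. of_nat (n choose i) * (lam / real n) ^ i * (1 - lam / real n) ^ (n - i)) \<longlonglongrightarrow> poisson_prob lam i"
proof -
  have "(\<lambda>n. of_nat (n choose i) / real n ^ i * lam ^ i * (1 - lam / real n) ^ n / (1 - lam / real n) ^ i)
      \<longlonglongrightarrow> 1 / fact i * lam ^ i * exp (- lam) / (1 - 0) ^ i"
    using tendsto_exp_limit_sequentially[of "- lam"]
    by (intro tendsto_intros binomial_div_power_tendsto) auto
  also have "1 / fact i * lam ^ i * exp (- lam) / (1 - 0) ^ i = poisson_prob lam i"
    by (simp add: poisson_prob_def)
  finally show ?thesis
  proof (rule Lim_transform_eventually)
    obtain N :: nat where N: "\<bar>lam\<bar> < real N" using reals_Archimedean2 by blast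
    show "eventually (\<lambda>n. of_nat (n choose i) / real n ^ i * lam ^ i * (1 - lam / real n) ^ n / (1 - lam / real n) ^ i
        = of_nat (n choose i) * (lam / real n) ^ i * (1 - lam / real n) ^ (n - i)) sequentially"
      using eventually_ge_at_top[of "max i (Suc N)"]
    proof eventually_elim
      case (elim n)
      then have "1 - lam / real n \<noteq> 0" "i \<le> n" using N by (auto simp: field_simps)
      then show ?case by (simp add: power_diff power_divide)
    qed
  qed
qed

section \<open>Approximation by finite Bernoulli sums\<close>

definition summable_probs :: "(nat \<Rightarrow> real) \<Rightarrow> bool" where
  "summable_probs q \<longleftrightarrow> (\<forall>i. 0 \<le> q i \<and> q i \<le> 1) \<and> summable q"

lemma summable_probs_bern_params: "summable_probs q \<Longrightarrow> bern_params q m"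
  by (simp add: summable_probs_def bern_params_def)

lemma summable_probs_upd_0: "summable_probs q \<Longrightarrow> summable_probs (q(i := 0))"
  unfolding summable_probs_def
  by (auto intro: summable_comparison_test[of "q(i := 0)" q])

lemma summable_probs_Suc_shift: "summable_probs q \<Longrightarrow> summable_probs (\<lambda>i. q (Suc i))"
  using summable_ignore_initial_segment[of q 1] by (simp add: summable_probs_def)

lemma suminf_upd_0: "summable q \<Longrightarrow> suminf (q(i := 0)) = suminf q - q i"
  for q :: "nat \<Rightarrow> real"
proof -
  assume "summable q"
  then have "(\<lambda>j. q j - (if j = i then q i else 0)) sums (suminf q - q i)"
    by (intro sums_diff summable_sums sums_single)
  moreover have "(\<lambda>j. q j - (if j = i then q i else 0)) = q(i := 0)" by auto
  ultimately show ?thesis by (simp add: sums_iff)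
qed

lemma bern_pmf_convergent:
  assumes "summable_probs q"
  shows "convergent (\<lambda>n. bern_pmf q n k)"
proof -
  have q: "summable q" "0 \<le> q n" for n
    using assms by (auto simp: summable_probs_def)
  have "norm (bern_pmf q (Suc n) k - bern_pmf q n k) \<le> q n" for n
  proof -
    have "bern_pmf q (Suc n) k - bern_pmf q n k = q n * (bern_pmf q n (k - 1) - bern_pmf q n k)"
      by (simp add: algebra_simps)
    moreover have "\<bar>bern_pmf q n (k - 1) - bern_pmf q n k\<bar> \<le> 1"
      using summable_probs_bern_params[OF assms, of n] bern_pmf_nonneg bern_pmf_le_1
      unfolding abs_le_iff by (smt (verit))
    ultimately show ?thesis
      using q(2)[of n] by (simp add: abs_mult mult_left_le)
  qed
  then have "summable (\<lambda>n. bern_pmf q (Suc n) k - bern_pmf q n k)"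
    by (intro summable_comparison_test[OF _ q(1)]) blast
  then have "convergent (\<lambda>n. \<Sum>i<n. bern_pmf q (Suc i) k - bern_pmf q i k)"
    by (simp only: summable_iff_convergent)
  then have "convergent (\<lambda>n. (bern_pmf q n k - bern_pmf q 0 k) + bern_pmf q 0 k)"
    unfolding sum_lessThan_telescope[of "\<lambda>i. bern_pmf q i k"] by (intro convergent_add convergent_const)
  then show ?thesis by simp
qed

definition bern_law_int :: "(nat \<Rightarrow> real) \<Rightarrow> int \<Rightarrow> real" where
  "bern_law_int q k = (if k < 0 then 0 else bern_law q (nat k))"

lemma bern_pmf_tendsto_bern_law_int:
  assumes "summable_probs q"
  shows "(\<lambda>n. bern_pmf q n k) \<longlonglongrightarrow> bern_law_int q k"
proof (cases "k < 0")
  case True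
  then show ?thesis by (simp add: bern_pmf_neg bern_law_int_def)
next
  case False
  then have "bern_law_int q k = lim (\<lambda>n. bern_pmf q n k)"
    by (simp add: bern_law_int_def bern_law_def bern_fin_eq_bern_pmf)
  then show ?thesis
    using bern_pmf_convergent[OF assms] by (simp add: convergent_LIMSEQ_iff)
qed

definition ebs_pmf_int :: "real \<Rightarrow> (nat \<Rightarrow> real) \<Rightarrow> int \<Rightarrow> real" where
  "ebs_pmf_int lam q k = (if k < 0 then 0 else ebs_pmf lam q (nat k))"

lemma ebs_pmf_int_of_nat [simp]: "ebs_pmf_int lam q (int j) = ebs_pmf lam q j"
  by (simp add: ebs_pmf_int_def)

lemma ebs_pmf_int_conv:
  "ebs_pmf_int lam q (int K) = (\<Sum>j\<le>K. bern_law_int q (int j) * poisson_prob lam (K - j))"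
  by (simp add: ebs_pmf_def poisson_prob_def bern_law_int_def mult_ac)

definition tail_sum :: "(nat \<Rightarrow> real) \<Rightarrow> nat \<Rightarrow> real" where
  "tail_sum q n = (\<Sum>j. q (j + n))"

text \<open>The \<open>n\<close>-th approximation of \<open>X + \<Sum>\<^sub>i B\<^sub>i\<close> by a finite Bernoulli sum of length \<open>2 n + 1\<close>:
  the summands \<open>B\<^sub>0, \<dots>, B\<^sub>n\<^sub>-\<^sub>1\<close>, one summand carrying the tail mass \<open>\<Sum>\<^sub>j\<^sub>\<ge>\<^sub>n q\<^sub>j\<close>,
  and \<open>n\<close> summands of parameter \<open>\<lambda> / n\<close> approximating the Poisson part; the mean is exact.\<close>
definition approx_params :: "real \<Rightarrow> (nat \<Rightarrow> real) \<Rightarrow> nat \<Rightarrow> nat \<Rightarrow> real" where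
  "approx_params lam q n i =
     (if i < n then q i else if i = n then tail_sum q n else if i \<le> 2 * n then lam / real n else 0)"

abbreviation approx_len :: "nat \<Rightarrow> nat" where
  "approx_len n \<equiv> Suc n + n"

lemma tail_sum_tendsto_0: "summable q \<Longrightarrow> tail_sum q \<longlonglongrightarrow> 0"
  unfolding tail_sum_def by (rule suminf_exist_split2)

lemma sum_lessThan_add: "(\<Sum>i<m + n. f i) = (\<Sum>i<m. f i) + (\<Sum>i<n. f (m + i))"
  for f :: "nat \<Rightarrow> 'a::comm_monoid_add"
  by (induction n) (simp_all add: add_ac)

lemma approx_params_mean:
  assumes "summable q" "1 \<le> n"
  shows "bern_mean (approx_params lam q n) (approx_len n) = lam + suminf q"
proof -
  have "bern_mean (approx_params lam q n) (approx_len n)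
      = (\<Sum>i<Suc n. approx_params lam q n i) + (\<Sum>i<n. approx_params lam q n (Suc n + i))"
    by (rule sum_lessThan_add)
  also have "\<dots> = (\<Sum>i<n. q i) + tail_sum q n + lam"
    using assms(2) by (simp add: approx_params_def)
  also have "\<dots> = lam + suminf q"
    using suminf_split_initial_segment[OF assms(1), of n] by (simp add: tail_sum_def)
  finally show ?thesis .
qed

lemma eventually_approx_params:
  assumes "summable_probs q" "0 \<le> lam"
  shows "eventually (\<lambda>n. bern_params (approx_params lam q n) (approx_len n)
           \<and> bern_mean (approx_params lam q n) (approx_len n) = lam + suminf q) sequentially"
proof -
  obtain N :: nat where N: "lam < real N" using reals_Archimedean2 by blast
  have "eventually (\<lambda>n. tail_sum q n < 1) sequentially"
    using tail_sum_tendsto_0[of q] assms(1) by (auto simp: summable_probs_def order_tendsto_iff)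
  then show ?thesis using eventually_ge_at_top[of "Suc N"]
  proof eventually_elim
    case (elim n)
    have "0 \<le> tail_sum q n"
      using assms(1) unfolding tail_sum_def summable_probs_def
      by (intro suminf_nonneg summable_ignore_initial_segment) auto
    moreover have "lam / real n \<le> 1" using elim N by (simp add: field_simps)
    ultimately show ?case
      using elim assms approx_params_mean[of q n lam]
      by (auto simp: bern_params_def approx_params_def summable_probs_def)
  qed
qed

lemma eventually_approx_params_le:
  assumes "summable_probs q" "0 < c" "\<forall>i. q i \<le> c"
  shows "eventually (\<lambda>n. \<forall>i<approx_len n. approx_params lam q n i \<le> c) sequentially"
proof -
  obtain N :: nat where N: "lam / c < real N" using reals_Archimedean2 by blast
  have "eventually (\<lambda>n. tail_sum q n < c) sequentially"
    using tail_sum_tendsto_0[of q] assms by (auto simp: summable_probs_def order_tendsto_iff)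
  then show ?thesis using eventually_ge_at_top[of "Suc N"]
  proof eventually_elim
    case (elim n)
    then have "lam / c < real n" using N by simp
    then have "lam / real n \<le> c" using assms(2) elim by (simp add: field_simps)
    then show ?case using elim assms by (auto simp: approx_params_def)
  qed
qed

lemma approx_params_upd_0: "i < n \<Longrightarrow> approx_params lam (q(i := 0)) n = (approx_params lam q n)(i := 0)"
  by (rule ext) (auto simp: approx_params_def tail_sum_def)

lemma bern_pmf_approx_params:
  assumes "K \<le> n"
  shows "bern_pmf (approx_params lam q n) (approx_len n) (int K)
    = (\<Sum>j\<le>K. ((1 - tail_sum q n) * bern_pmf q n (int j) + tail_sum q n * bern_pmf q n (int j - 1))
        * bern_pmf (\<lambda>_. lam / real n) n (int (K - j)))"
proof -
  let ?A = "approx_params lam q n"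
  have head: "bern_pmf ?A (Suc n) j = (1 - tail_sum q n) * bern_pmf q n j + tail_sum q n * bern_pmf q n (j - 1)"
    for j
    using bern_pmf_cong[of n ?A q] by (simp add: approx_params_def)
  have tail: "bern_pmf (\<lambda>i. ?A (Suc n + i)) n j = bern_pmf (\<lambda>_. lam / real n) n j" for j
    by (intro bern_pmf_cong) (simp add: approx_params_def)
  have "bern_pmf ?A (approx_len n) (int K)
      = (\<Sum>j\<le>Suc n. bern_pmf ?A (Suc n) (int j) * bern_pmf (\<lambda>i. ?A (Suc n + i)) n (int K - int j))"
    by (rule bern_pmf_append)
  also have "\<dots> = (\<Sum>j\<le>K. bern_pmf ?A (Suc n) (int j) * bern_pmf (\<lambda>i. ?A (Suc n + i)) n (int K - int j))"
    using assms by (intro sum.mono_neutral_right) (auto simp: bern_pmf_neg)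
  also have "\<dots> = (\<Sum>j\<le>K. ((1 - tail_sum q n) * bern_pmf q n (int j) + tail_sum q n * bern_pmf q n (int j - 1))
        * bern_pmf (\<lambda>_. lam / real n) n (int (K - j)))"
    unfolding head tail by (intro sum.cong refl) (simp add: of_nat_diff)
  finally show ?thesis .
qed

lemma approx_tendsto:
  assumes "summable_probs q"
  shows "(\<lambda>n. bern_pmf (approx_params lam q n) (approx_len n) k) \<longlonglongrightarrow> ebs_pmf_int lam q k"
proof (cases "k < 0")
  case True
  then show ?thesis by (simp add: bern_pmf_neg ebs_pmf_int_def)
next
  case False
  then obtain K where K: "k = int K" by (metis nonneg_int_cases not_less)
  have "(\<lambda>n. \<Sum>j\<le>K. ((1 - tail_sum q n) * bern_pmf q n (int j) + tail_sum q n * bern_pmf q n (int j - 1))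
        * (of_nat (n choose (K - j)) * (lam / real n) ^ (K - j) * (1 - lam / real n) ^ (n - (K - j))))
      \<longlonglongrightarrow> (\<Sum>j\<le>K. ((1 - 0) * bern_law_int q (int j) + 0 * bern_law_int q (int j - 1)) * poisson_prob lam (K - j))"
    using tail_sum_tendsto_0 assms
    by (intro tendsto_intros bern_pmf_tendsto_bern_law_int binomial_tendsto_poisson)
      (auto simp: summable_probs_def)
  also have "(\<Sum>j\<le>K. ((1 - 0) * bern_law_int q (int j) + 0 * bern_law_int q (int j - 1)) * poisson_prob lam (K - j))
      = ebs_pmf_int lam q k"
    using K ebs_pmf_int_conv[of lam q K] by simp
  finally show ?thesis
  proof (rule Lim_transform_eventually)
    show "eventually (\<lambda>n. (\<Sum>j\<le>K. ((1 - tail_sum q n) * bern_pmf q n (int j) + tail_sum q n * bern_pmf q n (int j - 1))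
        * (of_nat (n choose (K - j)) * (lam / real n) ^ (K - j) * (1 - lam / real n) ^ (n - (K - j))))
      = bern_pmf (approx_params lam q n) (approx_len n) k) sequentially"
      using eventually_ge_at_top[of K]
      by eventually_elim (simp only: K bern_pmf_approx_params bern_pmf_const)
  qed
qed

lemma approx_upd_0_tendsto:
  assumes "summable_probs q"
  shows "(\<lambda>n. bern_pmf ((approx_params lam q n)(i := 0)) (approx_len n) k) \<longlonglongrightarrow> ebs_pmf_int lam (q(i := 0)) k"
  using approx_tendsto[OF summable_probs_upd_0[OF assms]]
proof (rule Lim_transform_eventually)
  show "eventually (\<lambda>n. bern_pmf (approx_params lam (q(i := 0)) n) (approx_len n) k
      = bern_pmf ((approx_params lam q n)(i := 0)) (approx_len n) k) sequentially"
    using eventually_gt_at_top[of i] by eventually_elim (simp add: approx_params_upd_0)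
qed

section \<open>The law of an extended Bernoulli sum\<close>

declare bern_pmf.simps(2) [simp del]

text \<open>The inequalities below are limits of the corresponding inequalities for the approximating
  finite Bernoulli sums, whose mean is exactly \<open>\<lambda> + \<Sum>\<^sub>i q\<^sub>i\<close>.\<close>

lemma ebs_pmf_int_nonneg:
  assumes "summable_probs q" "0 \<le> lam"
  shows "0 \<le> ebs_pmf_int lam q k"
proof (rule tendsto_le[OF sequentially_bot approx_tendsto[OF assms(1)] tendsto_const])
  show "eventually (\<lambda>n. 0 \<le> bern_pmf (approx_params lam q n) (approx_len n) k) sequentially"
    using eventually_approx_params[OF assms] by eventually_elim (auto intro: bern_pmf_nonneg)
qed

lemma ebs_pmf_int_mono_below_mean:
  assumes "summable_probs q" "0 \<le> lam" "of_int k \<le> lam + suminf q"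
  shows "ebs_pmf_int lam q (k - 1) \<le> ebs_pmf_int lam q k"
proof (rule tendsto_le[OF sequentially_bot approx_tendsto[OF assms(1)] approx_tendsto[OF assms(1)]])
  show "eventually (\<lambda>n. bern_pmf (approx_params lam q n) (approx_len n) (k - 1)
      \<le> bern_pmf (approx_params lam q n) (approx_len n) k) sequentially"
    using eventually_approx_params[OF assms(1,2)]
    by eventually_elim (use assms(3) in \<open>auto intro: bern_pmf_mono_below_mean\<close>)
qed

lemma ebs_pmf_int_increment_ge:
  assumes "summable_probs q" "0 \<le> lam" "of_int k \<le> lam + suminf q"
  shows "(lam + suminf q - of_int k) * ebs_pmf_int lam q (k - 1)
           + q i ^ 2 * (ebs_pmf_int lam (q(i := 0)) (k - 1) - ebs_pmf_int lam (q(i := 0)) (k - 1 - 1))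
         \<le> of_int k * (ebs_pmf_int lam q k - ebs_pmf_int lam q (k - 1))"
proof (rule tendsto_le[OF sequentially_bot])
  let ?A = "approx_params lam q" and ?M = approx_len
  show "(\<lambda>n. (lam + suminf q - of_int k) * bern_pmf (?A n) (?M n) (k - 1)
      + q i ^ 2 * (bern_pmf ((?A n)(i := 0)) (?M n) (k - 1) - bern_pmf ((?A n)(i := 0)) (?M n) (k - 1 - 1)))
    \<longlonglongrightarrow> (lam + suminf q - of_int k) * ebs_pmf_int lam q (k - 1)
      + q i ^ 2 * (ebs_pmf_int lam (q(i := 0)) (k - 1) - ebs_pmf_int lam (q(i := 0)) (k - 1 - 1))"
    using approx_tendsto[OF assms(1)] approx_upd_0_tendsto[OF assms(1)] by (intro tendsto_intros)
  show "(\<lambda>n. of_int k * (bern_pmf (?A n) (?M n) k - bern_pmf (?A n) (?M n) (k - 1)))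
    \<longlonglongrightarrow> of_int k * (ebs_pmf_int lam q k - ebs_pmf_int lam q (k - 1))"
    using approx_tendsto[OF assms(1)] by (intro tendsto_intros)
  show "eventually (\<lambda>n. (lam + suminf q - of_int k) * bern_pmf (?A n) (?M n) (k - 1)
      + q i ^ 2 * (bern_pmf ((?A n)(i := 0)) (?M n) (k - 1) - bern_pmf ((?A n)(i := 0)) (?M n) (k - 1 - 1))
     \<le> of_int k * (bern_pmf (?A n) (?M n) k - bern_pmf (?A n) (?M n) (k - 1))) sequentially"
    using eventually_approx_params[OF assms(1,2)] eventually_gt_at_top[of i]
  proof eventually_elim
    case (elim n)
    then have "i < ?M n" "?A n i = q i" by (auto simp: approx_params_def)
    then show ?case using bern_pmf_increment_ge[of "?A n" "?M n" k i] elim assms(3) by simp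
  qed
qed

lemma ebs_pmf_int_strict_antimono_above_mean:
  assumes "summable_probs q" "0 \<le> lam" "0 < c" "c \<le> 1" "\<forall>i. q i \<le> c"
    and "lam + suminf q + c \<le> of_int k + 1"
  shows "(of_int k + 1) / (lam + suminf q + c) * ebs_pmf_int lam q (k + 1) \<le> ebs_pmf_int lam q k"
proof (rule tendsto_le[OF sequentially_bot approx_tendsto[OF assms(1)] tendsto_mult_left[OF approx_tendsto[OF assms(1)]]])
  show "eventually (\<lambda>n. (of_int k + 1) / (lam + suminf q + c) * bern_pmf (approx_params lam q n) (approx_len n) (k + 1)
      \<le> bern_pmf (approx_params lam q n) (approx_len n) k) sequentially"
    using eventually_approx_params[OF assms(1,2)] eventually_approx_params_le[OF assms(1,3,5), of lam]
  proof eventually_elim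
    case (elim n)
    then show ?case
      using bern_pmf_strict_antimono_above_mean[of "approx_params lam q n" "approx_len n" c k] assms(3,4,6)
      by simp
  qed
qed

lemma ebs_pmf_int_log_concave:
  assumes "summable_probs q" "0 \<le> lam" "x \<le> y"
  shows "ebs_pmf_int lam q (x - 1) * ebs_pmf_int lam q (y + 1) \<le> ebs_pmf_int lam q x * ebs_pmf_int lam q y"
proof (rule tendsto_le[OF sequentially_bot])
  show "eventually (\<lambda>n. bern_pmf (approx_params lam q n) (approx_len n) (x - 1) * bern_pmf (approx_params lam q n) (approx_len n) (y + 1)
      \<le> bern_pmf (approx_params lam q n) (approx_len n) x * bern_pmf (approx_params lam q n) (approx_len n) y) sequentially"
    using eventually_approx_params[OF assms(1,2)]
    by eventually_elim (use assms(3) in \<open>auto intro: bern_pmf_log_concave\<close>)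
qed (intro tendsto_mult approx_tendsto[OF assms(1)])+

lemma ebs_pmf_int_remove:
  assumes "summable_probs q"
  shows "ebs_pmf_int lam q k = (1 - q i) * ebs_pmf_int lam (q(i := 0)) k + q i * ebs_pmf_int lam (q(i := 0)) (k - 1)"
proof (rule LIMSEQ_unique[OF approx_tendsto[OF assms]])
  have "(\<lambda>n. (1 - q i) * bern_pmf ((approx_params lam q n)(i := 0)) (approx_len n) k
      + q i * bern_pmf ((approx_params lam q n)(i := 0)) (approx_len n) (k - 1))
    \<longlonglongrightarrow> (1 - q i) * ebs_pmf_int lam (q(i := 0)) k + q i * ebs_pmf_int lam (q(i := 0)) (k - 1)"
    using approx_upd_0_tendsto[OF assms] by (intro tendsto_intros)
  then show "(\<lambda>n. bern_pmf (approx_params lam q n) (approx_len n) k)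
    \<longlonglongrightarrow> (1 - q i) * ebs_pmf_int lam (q(i := 0)) k + q i * ebs_pmf_int lam (q(i := 0)) (k - 1)"
  proof (rule Lim_transform_eventually)
    show "eventually (\<lambda>n. (1 - q i) * bern_pmf ((approx_params lam q n)(i := 0)) (approx_len n) k
        + q i * bern_pmf ((approx_params lam q n)(i := 0)) (approx_len n) (k - 1)
      = bern_pmf (approx_params lam q n) (approx_len n) k) sequentially"
      using eventually_gt_at_top[of i]
    proof eventually_elim
      case (elim n)
      then have "i < approx_len n" "approx_params lam q n i = q i" by (auto simp: approx_params_def)
      then show ?case using bern_pmf_remove[of i "approx_len n" "approx_params lam q n" k] by simp
    qed
  qed
qed

lemma ebs_pmf_int_markov:
  assumes "summable_probs q" "0 \<le> lam"
  shows "(of_nat K + 1) * (1 - (\<Sum>j\<le>K. ebs_pmf_int lam q (int j))) \<le> lam + suminf q"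
proof (rule tendsto_le[OF sequentially_bot tendsto_const])
  show "(\<lambda>n. (of_nat K + 1) * (1 - (\<Sum>j\<le>K. bern_pmf (approx_params lam q n) (approx_len n) (int j))))
    \<longlonglongrightarrow> (of_nat K + 1) * (1 - (\<Sum>j\<le>K. ebs_pmf_int lam q (int j)))"
    using approx_tendsto[OF assms(1)] by (intro tendsto_intros)
  show "eventually (\<lambda>n. (of_nat K + 1) * (1 - (\<Sum>j\<le>K. bern_pmf (approx_params lam q n) (approx_len n) (int j)))
      \<le> lam + suminf q) sequentially"
    using eventually_approx_params[OF assms] by eventually_elim (metis bern_pmf_markov)
qed

lemma ebs_pmf_int_upd_0_eq_Suc_shift:
  assumes "summable_probs q"
  shows "ebs_pmf_int lam (q(0 := 0)) k = ebs_pmf_int lam (\<lambda>i. q (Suc i)) k"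
proof -
  have "bern_law_int (q(0 := 0)) (int j) = bern_law_int (\<lambda>i. q (Suc i)) (int j)" for j
  proof (rule LIMSEQ_unique)
    show "(\<lambda>n. bern_pmf (q(0 := 0)) (Suc n) j) \<longlonglongrightarrow> bern_law_int (q(0 := 0)) j"
      using LIMSEQ_Suc[OF bern_pmf_tendsto_bern_law_int[OF summable_probs_upd_0[OF assms]]] .
    show "(\<lambda>n. bern_pmf (q(0 := 0)) (Suc n) j) \<longlonglongrightarrow> bern_law_int (\<lambda>i. q (Suc i)) j"
      using bern_pmf_tendsto_bern_law_int[OF summable_probs_Suc_shift[OF assms]]
      by (simp add: bern_pmf_Suc_shift)
  qed
  then show ?thesis
    by (simp add: ebs_pmf_int_def ebs_pmf_def bern_law_int_def)
qed

lemma ebs_pmf_int_indicator: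
  "ebs_pmf_int lam (\<lambda>i. if i < a then 1 else 0) (int j) = (if j < a then 0 else poisson_prob lam (j - a))"
proof -
  let ?q = "\<lambda>i::nat. if i < a then (1::real) else 0"
  have q: "summable_probs ?q"
    unfolding summable_probs_def by (simp add: summable_finite[of "{..<a}"])
  have law: "bern_law_int ?q k = (if k = int a then 1 else 0)" for k
  proof (rule LIMSEQ_unique[OF bern_pmf_tendsto_bern_law_int[OF q]])
    show "(\<lambda>n. bern_pmf ?q n k) \<longlonglongrightarrow> (if k = int a then 1 else 0)"
    proof (rule Lim_transform_eventually[OF tendsto_const])
      show "eventually (\<lambda>n. (if k = int a then 1 else 0) = bern_pmf ?q n k) sequentially"
        using eventually_ge_at_top[of a] by eventually_elim (simp add: bern_pmf_indicator)
    qed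
  qed
  have "ebs_pmf_int lam ?q (int j) = (\<Sum>i\<le>j. if i = a then poisson_prob lam (j - a) else 0)"
    unfolding ebs_pmf_int_conv law by (intro sum.cong) auto
  then show ?thesis by (simp add: sum.delta')
qed

section \<open>Shape of the law\<close>

lemma ebs_pmf_int_minus_1:
  "ebs_pmf_int lam q (int k - 1) = (if k = 0 then 0 else ebs_pmf lam q (k - 1))"
  by (simp add: ebs_pmf_int_def nat_diff_distrib)

lemma ebs_pmf_int_plus_1 [simp]:
  "ebs_pmf_int lam q (int k + 1) = ebs_pmf lam q (Suc k)"
  "ebs_pmf_int lam q (1 + int k) = ebs_pmf lam q (Suc k)"
  using ebs_pmf_int_of_nat[of lam q "Suc k"] by (simp_all add: add.commute)

lemma ebs_pmf_int_exists_pos: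
  assumes "summable_probs q" "0 \<le> lam" "lam + suminf q < of_nat K + 1"
  shows "\<exists>j\<le>K. 0 < ebs_pmf_int lam q (int j)"
proof (rule ccontr)
  assume "\<not> ?thesis"
  then have "\<forall>j\<le>K. ebs_pmf_int lam q (int j) = 0"
    using ebs_pmf_int_nonneg[OF assms(1,2)] by (meson antisym not_less)
  then show False
    using ebs_pmf_int_markov[OF assms(1,2), of K] assms(3) by simp
qed

lemma ebs_pmf_int_pos:
  assumes "summable_probs q" "0 \<le> lam" "of_nat K \<le> lam + suminf q" "lam + suminf q < of_nat K + 1"
  shows "0 < ebs_pmf_int lam q (int K)"
proof -
  obtain j where "j \<le> K" "0 < ebs_pmf_int lam q (int j)"
    using ebs_pmf_int_exists_pos[OF assms(1,2,4)] by blast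
  moreover have "ebs_pmf_int lam q (int j) \<le> ebs_pmf_int lam q (int K)"
  proof (rule lift_Suc_mono_le_ivl[where N = "{..<K}", OF _ \<open>j \<le> K\<close>])
    fix i assume "i \<in> {..<K}"
    then show "ebs_pmf_int lam q (int i) \<le> ebs_pmf_int lam q (int (Suc i))"
      using ebs_pmf_int_mono_below_mean[OF assms(1,2), of "int (Suc i)"] assms(3) by simp
  qed auto
  ultimately show ?thesis by linarith
qed

lemma ebs_pmf_int_strict_descent:
  assumes "summable_probs q" "0 \<le> lam" "0 < c" "c \<le> 1" "\<forall>i. q i \<le> c"
    and "lam + suminf q + c < of_int k + 1" and "0 < ebs_pmf_int lam q k"
  shows "ebs_pmf_int lam q (k + 1) < ebs_pmf_int lam q k"
proof -
  define t where "t = (of_int k + 1) / (lam + suminf q + c)"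
  have "0 \<le> suminf q"
    using assms(1) by (auto simp: summable_probs_def intro: suminf_nonneg)
  then have t: "1 < t"
    using assms(2,3,6) by (simp add: t_def field_simps)
  have le: "t * ebs_pmf_int lam q (k + 1) \<le> ebs_pmf_int lam q k"
    using ebs_pmf_int_strict_antimono_above_mean[OF assms(1-5)] assms(6) by (simp add: t_def)
  show ?thesis
  proof (cases "ebs_pmf_int lam q (k + 1) = 0")
    case False
    then have "ebs_pmf_int lam q (k + 1) < t * ebs_pmf_int lam q (k + 1)"
      using t ebs_pmf_int_nonneg[OF assms(1,2), of "k + 1"] by simp
    then show ?thesis using le by linarith
  qed (use assms(7) in simp)
qed

lemma ebs_pmf_int_exists_descent:
  assumes q: "summable_probs q" "0 \<le> lam" and c: "0 < c" "c \<le> 1" "\<forall>i. q i \<le> c"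
    and mean: "lam + suminf q + c < of_nat K + 1"
  shows "\<exists>j\<le>K. ebs_pmf_int lam q (int j + 1) < ebs_pmf_int lam q (int j)"
proof (rule ccontr)
  let ?f = "ebs_pmf_int lam q"
  assume "\<not> ?thesis"
  then have rise: "?f (int j) \<le> ?f (int j + 1)" if "j \<le> K" for j
    using that by (meson not_less)
  have "?f (int K) = 0"
  proof (rule ccontr)
    assume "?f (int K) \<noteq> 0"
    then have "0 < ?f (int K)"
      using ebs_pmf_int_nonneg[OF q, of "int K"] by (simp add: order_less_le)
    then have "?f (int K + 1) < ?f (int K)"
      using ebs_pmf_int_strict_descent[OF q c, of "int K"] mean by simp
    then show False using rise[of K] by simp
  qed
  moreover have "lam + suminf q < of_nat K + 1"
    using c(1) mean by simp
  then obtain j where "j \<le> K" "0 < ?f (int j)"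
    using ebs_pmf_int_exists_pos[OF q] by blast
  moreover have "?f (int j) \<le> ?f (int K)"
  proof (rule lift_Suc_mono_le_ivl[where N = "{..<K}", OF _ \<open>j \<le> K\<close>])
    show "?f (int i) \<le> ?f (int (Suc i))" if "i \<in> {..<K}" for i
      using rise[of i] that by (simp add: add.commute)
  qed auto
  ultimately show False by simp
qed

lemma ebs_pmf_int_strict_rise:
  assumes q: "summable_probs q" "0 \<le> lam"
    and mean: "of_nat K < lam + suminf q" "lam + suminf q < of_nat K + 1"
  shows "ebs_pmf_int lam q (int K - 1) < ebs_pmf_int lam q (int K)"
proof (cases "ebs_pmf_int lam q (int K - 1) = 0")
  case True
  then show ?thesis using ebs_pmf_int_pos[OF q] mean by simp
next
  case False
  let ?f = "ebs_pmf_int lam q" and ?h = "ebs_pmf_int lam (q(0 := 0))"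
  have "0 < ?f (int K - 1)"
    using False ebs_pmf_int_nonneg[OF q] by (simp add: order_less_le)
  then have "0 < (lam + suminf q - of_int (int K)) * ?f (int K - 1)"
    using mean(1) by simp
  moreover have "0 \<le> q 0 ^ 2 * (?h (int K - 1) - ?h (int K - 1 - 1))"
  proof -
    have "q 0 \<le> 1" "summable q" using q(1) by (auto simp: summable_probs_def)
    then have "of_int (int K - 1) \<le> lam + suminf (q(0 := 0))"
      using mean by (simp add: suminf_upd_0)
    from ebs_pmf_int_mono_below_mean[OF summable_probs_upd_0[OF q(1)] q(2) this]
    show ?thesis by simp
  qed
  moreover have "(lam + suminf q - of_int (int K)) * ?f (int K - 1)
      + q 0 ^ 2 * (?h (int K - 1) - ?h (int K - 1 - 1)) \<le> of_int (int K) * (?f (int K) - ?f (int K - 1))"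
    using ebs_pmf_int_increment_ge[OF q, of "int K" 0] mean(1) by simp
  ultimately have "0 < of_int (int K) * (?f (int K) - ?f (int K - 1))"
    by linarith
  then show ?thesis by (simp add: zero_less_mult_iff)
qed

lemma ebs_pmf_int_strict_rise_at_mean:
  assumes q: "summable_probs q" "0 \<le> lam" and mean: "lam + suminf q = of_nat K"
    and i: "0 < q i" "q i < 1"
  shows "ebs_pmf_int lam q (int K - 1) < ebs_pmf_int lam q (int K)"
proof -
  let ?f = "ebs_pmf_int lam q" and ?h = "ebs_pmf_int lam (q(i := 0))"
  have h: "summable_probs (q(i := 0))" using summable_probs_upd_0[OF q(1)] .
  have h_mean: "lam + suminf (q(i := 0)) = of_nat K - q i"
    using q(1) mean by (simp add: summable_probs_def suminf_upd_0)
  moreover have "0 \<le> suminf (q(i := 0))"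
    using h by (auto simp: summable_probs_def intro: suminf_nonneg)
  ultimately obtain K' where K: "K = Suc K'"
    using q(2) i(1) by (cases K) auto
  have "?h (int K' - 1) < ?h (int K')"
    using ebs_pmf_int_strict_rise[OF h q(2)] h_mean i K by simp
  then have "0 < q i ^ 2 * (?h (int K - 1) - ?h (int K - 1 - 1))"
    using i(1) K by simp
  also have "\<dots> \<le> of_int (int K) * (?f (int K) - ?f (int K - 1))"
    using ebs_pmf_int_increment_ge[OF q, of "int K" i] mean by simp
  finally show ?thesis by (simp add: zero_less_mult_iff)
qed

lemma ebs_pmf_int_strict_descent_at_mean_below_1:
  assumes q: "summable_probs q" "0 \<le> lam" and c: "\<forall>i. q i \<le> c" "c < 1"
    and mean: "lam + suminf q = of_nat K"
  shows "ebs_pmf_int lam q (int K + 1) < ebs_pmf_int lam q (int K)"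
proof (rule ebs_pmf_int_strict_descent[OF q, where c = "max c (1 / 2)"])
  show "0 < ebs_pmf_int lam q (int K)"
    using ebs_pmf_int_pos[OF q] mean by simp
qed (use c mean in \<open>auto simp: le_max_iff_disj\<close>)

lemma in_nablaD:
  assumes "in_nabla lam p"
  shows "summable_probs p" "0 \<le> lam" "i \<le> j \<Longrightarrow> p j \<le> p i"
proof -
  show antimono: "p j \<le> p i" if "i \<le> j" for i j
    using assms lift_Suc_antimono_le[of p, OF _ that] by (simp add: in_nabla_def)
  show "summable_probs p" "0 \<le> lam"
    using assms antimono[of 0] order_trans by (fastforce simp: in_nabla_def summable_probs_def)+
qed

lemma in_nabla_Suc_shift:
  assumes "in_nabla lam p"
  shows "in_nabla lam (\<lambda>i. p (Suc i))"
proof -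
  have "p (Suc 0) \<le> p 0" "p 0 \<le> 1"
    using in_nablaD(3)[OF assms, of 0 1] assms by (simp_all add: in_nabla_def)
  then have "p (Suc 0) \<le> 1" by linarith
  then show ?thesis
    using assms summable_ignore_initial_segment[of p 1] by (auto simp: in_nabla_def)
qed

lemma ebs_pmf_int_strict_descent_at_mean:
  assumes "in_nabla lam p" "lam + suminf p = of_nat K"
  shows "ebs_pmf_int lam p (int K + 1) < ebs_pmf_int lam p (int K)"
  using assms
proof (induction K arbitrary: p)
  case 0
  have "p 0 \<le> suminf p"
    using in_nablaD(1)[OF "0.prems"(1)] sum_le_suminf[of p "{0}"] by (auto simp: summable_probs_def)
  then have "p 0 < 1" using "0.prems" in_nablaD(2) by fastforce
  then show ?case
    using ebs_pmf_int_strict_descent_at_mean_below_1[OF in_nablaD(1,2)[OF "0.prems"(1)]] in_nablaD(3)[OF "0.prems"(1)]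
      "0.prems"(2) by blast
next
  case (Suc K)
  note p = in_nablaD[OF Suc.prems(1)]
  show ?case
  proof (cases "p 0 < 1")
    case True
    then show ?thesis
      using ebs_pmf_int_strict_descent_at_mean_below_1[OF p(1,2)] p(3) Suc.prems(2) by blast
  next
    case False
    then have p0: "p 0 = 1" using p(1) by (auto simp: summable_probs_def intro: antisym)
    have "suminf (\<lambda>i. p (Suc i)) = suminf p - 1"
      using suminf_split_head[of p] p(1) p0 by (simp add: summable_probs_def)
    then have "ebs_pmf_int lam (\<lambda>i. p (Suc i)) (int K + 1) < ebs_pmf_int lam (\<lambda>i. p (Suc i)) (int K)"
      using Suc.IH[OF in_nabla_Suc_shift[OF Suc.prems(1)]] Suc.prems(2) by simp
    moreover have "ebs_pmf_int lam p j = ebs_pmf_int lam (\<lambda>i. p (Suc i)) (j - 1)" for j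
      using ebs_pmf_int_remove[OF p(1), of lam j 0] ebs_pmf_int_upd_0_eq_Suc_shift[OF p(1)] p0 by simp
    from this[of "int (Suc K) + 1"] this[of "int (Suc K)"] show ?thesis
      using calculation by (simp add: add.commute)
  qed
qed

lemma in_nabla_zero_one_eq_indicator:
  assumes p: "in_nabla lam p" and zero_one: "\<forall>i. p i = 0 \<or> p i = 1"
  shows "\<exists>a. p = (\<lambda>i. if i < a then 1 else 0)"
proof -
  have "p \<longlonglongrightarrow> 0"
    using in_nablaD(1)[OF p] summable_LIMSEQ_zero by (auto simp: summable_probs_def)
  then have "eventually (\<lambda>i. p i < 1) sequentially"
    by (auto simp: order_tendsto_iff)
  then obtain i0 where "p i0 < 1"
    by (auto simp: eventually_sequentially)
  then have ex: "\<exists>i. p i \<noteq> 1" by (intro exI[of _ i0]) simp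
  define a where "a = (LEAST i. p i \<noteq> 1)"
  have pa: "p a = 0" using LeastI_ex[OF ex] zero_one unfolding a_def by metis
  have "p i = (if i < a then 1 else 0)" for i
  proof (cases "i < a")
    case True
    then show ?thesis using not_less_Least[of i "\<lambda>i. p i \<noteq> 1"] unfolding a_def by simp
  next
    case False
    then show ?thesis
      using pa in_nablaD(3)[OF p, of a i] zero_one[rule_format, of i] by auto
  qed
  then show ?thesis by blast
qed

lemma ebs_pmf_int_strict_rise_at_integer_mean:
  assumes p: "in_nabla lam p" and mean: "lam + suminf p = of_nat k"
    and not_shifted: "\<not> (\<exists>a<k. lam = real k - real a \<and> (\<forall>i. p i = (if i < a then 1 else 0)))"
  shows "ebs_pmf_int lam p (int k - 1) < ebs_pmf_int lam p (int k)"
proof (cases "\<exists>i. 0 < p i \<and> p i < 1")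
  case True
  then show ?thesis
    using ebs_pmf_int_strict_rise_at_mean[OF in_nablaD(1,2)[OF p] mean] by blast
next
  case False
  have "p i = 0 \<or> p i = 1" for i
  proof -
    have "0 \<le> p i" "p i \<le> 1" using in_nablaD(1)[OF p] by (auto simp: summable_probs_def)
    moreover have "\<not> (0 < p i \<and> p i < 1)" using False by blast
    ultimately show ?thesis by linarith
  qed
  then obtain a where a: "p = (\<lambda>i. if i < a then 1 else 0)"
    using in_nabla_zero_one_eq_indicator[OF p] by blast
  then have "suminf p = real a"
    by (subst suminf_finite[of "{..<a}"]) auto
  then have lam: "lam = real k - real a"
    using mean by simp
  then have "\<not> a < k"
    using not_shifted a by auto
  then have "a = k" "lam = 0"
    using lam in_nablaD(2)[OF p] by auto
  then show ?thesis
    using a ebs_pmf_int_indicator[of lam a k] ebs_pmf_int_indicator[of lam a "k - 1"]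
    by (simp add: ebs_pmf_int_minus_1 poisson_prob_def)
qed

section \<open>Modes\<close>

lemma ebs_pmf_int_rise_after_descent_eq_0:
  assumes q: "summable_probs q" "0 \<le> lam" and "a < b"
    and descent: "ebs_pmf_int lam q (int a + 1) < ebs_pmf_int lam q (int a)"
    and rise: "ebs_pmf_int lam q (int b - 1) \<le> ebs_pmf_int lam q (int b)"
  shows "ebs_pmf_int lam q (int b) = 0"
proof (rule ccontr)
  let ?f = "ebs_pmf_int lam q"
  assume "?f (int b) \<noteq> 0"
  then have pos: "0 < ?f (int b)"
    using ebs_pmf_int_nonneg[OF q, of "int b"] by linarith
  have "b \<noteq> Suc a"
    using descent rise by (auto simp: add.commute)
  then have "int a + 1 \<le> int b - 1" using \<open>a < b\<close> by simp
  from ebs_pmf_int_log_concave[OF q this]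
  have "?f (int a) * ?f (int b) \<le> ?f (int a + 1) * ?f (int b - 1)" by simp
  also have "\<dots> \<le> ?f (int a + 1) * ?f (int b)"
    using rise ebs_pmf_int_nonneg[OF q, of "int a + 1"] by (intro mult_left_mono)
  also have "\<dots> < ?f (int a) * ?f (int b)"
    using descent pos by simp
  finally show False by simp
qed

lemma mode_plus_eqI:
  assumes q: "summable_probs q" "0 \<le> lam"
    and rise: "ebs_pmf_int lam q (int k - 1) \<le> ebs_pmf_int lam q (int k)"
    and descent: "ebs_pmf_int lam q (int k + 1) < ebs_pmf_int lam q (int k)"
  shows "mode_plus lam q = k"
proof -
  let ?f = "ebs_pmf_int lam q"
  have mode_iff: "((j = 0 \<or> ebs_pmf lam q (j - 1) \<le> ebs_pmf lam q j) \<and> ebs_pmf lam q j > ebs_pmf lam q (Suc j))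
      \<longleftrightarrow> ?f (int j - 1) \<le> ?f (int j) \<and> ?f (int j + 1) < ?f (int j)" for j
  proof (cases "j = 0")
    case True
    then show ?thesis using ebs_pmf_int_nonneg[OF q, of 0] by (simp add: ebs_pmf_int_def)
  qed (simp add: ebs_pmf_int_minus_1)
  have unique: "j = k" if "?f (int j - 1) \<le> ?f (int j)" "?f (int j + 1) < ?f (int j)" for j
  proof -
    have "\<not> j < k"
      using ebs_pmf_int_rise_after_descent_eq_0[OF q _ that(2) rise] descent ebs_pmf_int_nonneg[OF q, of "int k + 1"]
      by fastforce
    moreover have "\<not> k < j"
      using ebs_pmf_int_rise_after_descent_eq_0[OF q _ descent that(1)] that(2) ebs_pmf_int_nonneg[OF q, of "int j + 1"]
      by fastforce
    ultimately show ?thesis by simp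
  qed
  show ?thesis
    unfolding mode_plus_def
  proof (rule the_equality)
    show "(k = 0 \<or> ebs_pmf lam q (k - 1) \<le> ebs_pmf lam q k) \<and> ebs_pmf lam q k > ebs_pmf lam q (Suc k)"
      using rise descent mode_iff[of k] by blast
  next
    fix j assume "(j = 0 \<or> ebs_pmf lam q (j - 1) \<le> ebs_pmf lam q j) \<and> ebs_pmf lam q j > ebs_pmf lam q (Suc j)"
    then show "j = k" using unique mode_iff[of j] by blast
  qed
qed

lemma mode_plus_le:
  assumes q: "summable_probs q" "0 \<le> lam"
    and descent: "ebs_pmf_int lam q (int j + 1) < ebs_pmf_int lam q (int j)"
  shows "mode_plus lam q \<le> j"
proof -
  let ?f = "ebs_pmf_int lam q"
  define j0 where "j0 = (LEAST j. ?f (int j + 1) < ?f (int j))"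
  have "?f (int j0 + 1) < ?f (int j0)" "j0 \<le> j"
    unfolding j0_def using descent by (auto intro: LeastI Least_le)
  moreover have "?f (int j0 - 1) \<le> ?f (int j0)"
  proof (cases "j0 = 0")
    case True
    then show ?thesis using ebs_pmf_int_nonneg[OF q, of 0] by (simp add: ebs_pmf_int_def)
  next
    case False
    then have "\<not> ?f (int (j0 - 1) + 1) < ?f (int (j0 - 1))"
      unfolding j0_def by (intro not_less_Least) simp
    then show ?thesis using False by (simp add: of_nat_diff)
  qed
  ultimately show ?thesis using mode_plus_eqI[OF q] by simp
qed

lemma mode_minus_eq_mode_plus:
  "mode_plus lam q = k \<Longrightarrow> ebs_pmf_int lam q (int k - 1) \<noteq> ebs_pmf_int lam q (int k) \<Longrightarrow> mode_minus lam q = k"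
  by (auto simp: mode_minus_def Let_def ebs_pmf_int_minus_1)

lemma mode_minus_eq_pred:
  "mode_plus lam q = k \<Longrightarrow> 0 < k \<Longrightarrow> ebs_pmf_int lam q (int k - 1) = ebs_pmf_int lam q (int k)
    \<Longrightarrow> mode_minus lam q = k - 1"
  by (auto simp: mode_minus_def Let_def ebs_pmf_int_minus_1)

lemma mode_minus_le_mode_plus: "mode_minus lam q \<le> mode_plus lam q"
  by (simp add: mode_minus_def Let_def)

lemma mode_plus_le_Suc_mode_minus: "mode_plus lam q \<le> Suc (mode_minus lam q)"
  by (simp add: mode_minus_def Let_def)

lemma mode_plus_upd_0_le:
  assumes p: "in_nabla lam p" and mean: "lam + suminf p < real k + 1"
  shows "mode_plus lam (p(0 := 0)) \<le> k"
proof -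
  let ?q = "p(0 := 0)"
  define e where "e = min 1 ((real k + 1 - (lam + suminf p)) / 2)"
  define c where "c = max (p 0) e"
  have q: "summable_probs ?q" "0 \<le> lam"
    using summable_probs_upd_0 in_nablaD(1,2)[OF p] by auto
  have p0: "0 \<le> p 0" "p 0 \<le> 1" "summable p"
    using in_nablaD(1)[OF p] by (auto simp: summable_probs_def)
  have e: "0 < e" "e \<le> 1" "e \<le> (real k + 1 - (lam + suminf p)) / 2"
    using mean by (auto simp: e_def min_def)
  then have "0 < c" "c \<le> 1"
    using p0 by (auto simp: c_def less_max_iff_disj)
  moreover have "\<forall>i. ?q i \<le> c"
  proof
    fix i
    have "?q i \<le> p 0"
      using in_nablaD(3)[OF p, of 0 i] p0 by auto
    then show "?q i \<le> c" by (simp add: c_def le_max_iff_disj)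
  qed
  moreover have "lam + suminf ?q + c < of_nat k + 1"
    using mean p0 e by (simp add: c_def suminf_upd_0 max_def)
  ultimately obtain j where "j \<le> k" "ebs_pmf_int lam ?q (int j + 1) < ebs_pmf_int lam ?q (int j)"
    using ebs_pmf_int_exists_descent[OF q] by blast
  then show ?thesis using mode_plus_le[OF q] by fastforce
qed

text \<open>Past the mean the law decreases strictly wherever it is positive (take \<open>c = 1\<close>), which
  bounds the mode by \<open>k + 1\<close>.\<close>
lemma mode_bounds_noninteger_mean:
  assumes p: "in_nabla lam p" and mean: "real k < lam + suminf p" "lam + suminf p < real k + 1"
  shows "k \<le> mode_minus lam p" "mode_plus lam p \<le> k + 1"
proof -
  let ?f = "ebs_pmf_int lam p"
  note q = in_nablaD(1,2)[OF p]
  have rise: "?f (int k - 1) < ?f (int k)"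
    using ebs_pmf_int_strict_rise[OF q mean] .
  have "k \<le> mode_minus lam p \<and> mode_plus lam p \<le> k + 1"
  proof (cases "?f (int k + 1) < ?f (int k)")
    case True
    then have "mode_plus lam p = k"
      using mode_plus_eqI[OF q] rise by simp
    moreover have "mode_minus lam p = k"
      using mode_minus_eq_mode_plus[OF calculation] rise by simp
    ultimately show ?thesis by simp
  next
    case False
    then have "0 < ?f (int k + 1)"
      using ebs_pmf_int_pos[OF q, of k] mean by simp
    then have "ebs_pmf lam p (Suc (Suc k)) < ebs_pmf lam p (Suc k)"
      using ebs_pmf_int_strict_descent[OF q, of 1 "int (Suc k)"] ebs_pmf_int_of_nat[of lam p "Suc (Suc k)"]
        q(1) mean by (simp add: summable_probs_def)
    then have "mode_plus lam p = Suc k"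
      using mode_plus_eqI[OF q, of "Suc k"] False by (simp add: ebs_pmf_int_minus_1 del: of_nat_Suc)
    then show ?thesis
      using mode_plus_le_Suc_mode_minus[of lam p] by simp
  qed
  then show "k \<le> mode_minus lam p" "mode_plus lam p \<le> k + 1" by auto
qed

lemma mode_integer_mean:
  assumes p: "in_nabla lam p" and mean: "lam + suminf p = real k"
    and not_shifted: "\<not> (\<exists>a<k. lam = real k - real a \<and> (\<forall>i. p i = (if i < a then 1 else 0)))"
  shows "mode_plus lam p = k" "mode_minus lam p = k"
proof -
  have rise: "ebs_pmf_int lam p (int k - 1) < ebs_pmf_int lam p (int k)"
    using ebs_pmf_int_strict_rise_at_integer_mean[OF assms] .
  show "mode_plus lam p = k"
    using mode_plus_eqI[OF in_nablaD(1,2)[OF p] less_imp_le[OF rise]]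
      ebs_pmf_int_strict_descent_at_mean[OF p mean] by simp
  then show "mode_minus lam p = k"
    using mode_minus_eq_mode_plus rise by simp
qed

lemma shifted_poisson_twin_mode:
  assumes "a < k" and lam: "lam = real k - real a" and p: "\<forall>i. p i = (if i < a then 1 else 0)"
  shows "ebs_pmf lam p j = (if j < a then 0 else exp (- lam) * lam ^ (j - a) / fact (j - a))"
    "mode_plus lam p = k" "mode_minus lam p = k - 1"
proof -
  have p: "p = (\<lambda>i. if i < a then 1 else 0)" using p by auto
  have pmf: "ebs_pmf lam p j = (if j < a then 0 else poisson_prob lam (j - a))" for j
    using ebs_pmf_int_indicator[of lam a j] unfolding p by simp
  then show "ebs_pmf lam p j = (if j < a then 0 else exp (- lam) * lam ^ (j - a) / fact (j - a))"
    by (simp add: poisson_prob_def)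
  define L where "L = k - a"
  have L: "0 < L" "lam = real L" using assms(1) lam by (auto simp: L_def)
  have q: "summable_probs p" "0 \<le> lam"
    unfolding p summable_probs_def using L by (auto simp: summable_finite[of "{..<a}"])
  have at_k: "ebs_pmf lam p (k - 1) = poisson_prob lam (L - 1)" "ebs_pmf lam p k = poisson_prob lam L"
      "ebs_pmf lam p (Suc k) = poisson_prob lam (Suc L)"
    using pmf[of "k - 1"] pmf[of k] pmf[of "Suc k"] assms(1) by (simp_all add: L_def Suc_diff_le)
  have "poisson_prob lam L = poisson_prob lam (L - 1)"
    using poisson_prob_Suc[of lam "L - 1"] L by simp
  then have twin: "ebs_pmf_int lam p (int k - 1) = ebs_pmf_int lam p (int k)"
    using at_k assms(1) by (simp add: ebs_pmf_int_minus_1)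
  have "poisson_prob lam (Suc L) = poisson_prob lam L * (real L / real (Suc L))"
    using poisson_prob_Suc[of lam L] L by simp
  also have "\<dots> < poisson_prob lam L * 1"
    using L by (intro mult_strict_left_mono) (auto simp: poisson_prob_def)
  finally have "ebs_pmf_int lam p (int k + 1) < ebs_pmf_int lam p (int k)"
    using at_k by simp
  then show mode: "mode_plus lam p = k"
    using mode_plus_eqI[OF q] twin by simp
  show "mode_minus lam p = k - 1"
    using mode_minus_eq_pred[OF mode] twin assms(1) by simp
qed

theorem theorem2:
  fixes lam :: real and p :: "nat \<Rightarrow> real"
  assumes "in_nabla lam p"
  shows "(\<forall>k::nat. real k < ebs_mean lam p \<and> ebs_mean lam p < real k + 1 \<longrightarrow>
            mode_plus lam (p(0 := 0)) \<le> k \<and> k \<le> mode_minus lam p \<and>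
            mode_minus lam p \<le> mode_plus lam p \<and> mode_plus lam p \<le> k + 1)
       \<and> (\<forall>k::nat. ebs_mean lam p = real k \<longrightarrow>
            ((\<not> (\<exists>a<k. lam = real k - real a \<and> (\<forall>i. p i = (if i < a then 1 else 0)))) \<longrightarrow>
               mode_plus lam p = k \<and> mode_minus lam p = k)
          \<and> (\<forall>a<k. lam = real k - real a \<and> (\<forall>i. p i = (if i < a then 1 else 0)) \<longrightarrow>
               (\<forall>j. ebs_pmf lam p j =
                    (if j < a then 0 else exp (- lam) * lam ^ (j - a) / fact (j - a)))
               \<and> mode_plus lam p = k \<and> mode_minus lam p = k - 1))"
  using mode_plus_upd_0_le[OF assms] mode_bounds_noninteger_mean[OF assms] mode_minus_le_mode_plus
    mode_integer_mean[OF assms] shifted_poisson_twin_mode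
  by (auto simp: ebs_mean_def)

end
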